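(* Let $c$ be a correct client following the client protocol described in the context, let $r$ be a \textsc{get} operation and $w$ a \textsc{put} operation issued by $c$, with $r$ issued before $w$. Then $\mathrm{ts}(w) > \mathrm{ts}(r)$.
   Context: Client model. A client $c$ has a physical clock whose reading $\mathsf{clock}_c$ is a positive real number that is strictly increasing in real time. The client keeps two variables, a dependency time $\mathsf{dt}_c$ and a common global stable time $\mathsf{cgst}_c$, both initially $0$; they are modified only as described below. A correct client issues its operations one at a time: an operation is issued only after the previous one has returned. Servers are grouped into partitions of $3f+1$ replicas each, and a quorum is a set of $2f+1$ replicas of one partition. \textsc{get}$(k)$: the client sets $ts \gets \max\{\mathsf{dt}_c, \mathsf{cgst}_c\}$ and sends a request carrying $ts$ to the replicas of the partition holding $k$. It then waits for replies from a quorum $Q$, each reply from replica $i\in Q$ carrying a value $v_i$ and a number $cgst_i$, sets $\mathsf{cgst}_c \gets \max\{\mathsf{cgst}_c, \min_{i\in Q} cgst_i\}$, and returns a value. \textsc{put}$(k,v)$: the client waits until $\mathsf{clock}_c > \mathsf{cgst}_c$, then sends a request carrying $(k, v, cl, c)$, where $cl$ is the current reading of $\mathsf{clock}_c$, to the replicas of the partition holding $k$. It then waits for replies from a quorum $Q$, each reply from $i\in Q$ carrying a number $cgst_i$, sets $\mathsf{cgst}_c \gets \max\{\mathsf{cgst}_c, \min_{i\in Q} cgst_i\}$, then sets $\mathsf{dt}_c$ to the current reading of $\mathsf{clock}_c$, and returns. Timestamps: for a \textsc{get} operation $o$, $\mathrm{ts}(o)$ is the value $ts=\max\{\mathsf{dt}_c,\mathsf{cgst}_c\}$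 computed when $o$ is issued; for a \textsc{put} operation $o$, $\mathrm{ts}(o)$ is the clock value $cl$ sent in its request. *)

theory Defs
  imports Complex_Main
begin

text \<open>
Real time is modelled by the reals; the physical
clock of the client is a function from real time to clock readings.
Each operation of the run is described by the nondeterministic choices made by
the environment:
  GetOp k t tr m     : get of key k, issued (request sent) at real time t,
                       replies from the quorum received and value returned at
                       time tr; m is the minimum of the cgst_i carried by the
                       quorum replies.
  PutOp k v t s m tr : put of (k,v), issued at real time t, request sent at
                       time s (after waiting), m is the minimum of the cgst_i
                       carried by the quorum replies, and tr is the real time at
                       which dt is set to the clock reading (just before return).
The client state is the pair (dt, cgst).
\<close>

datatype ('k, 'v) cop =
    GetOp 'k real real real
  | PutOp 'k 'v real real real real

fun issue_time :: "('k, 'v) cop \<Rightarrow> real" where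
  "issue_time (GetOp k t tr m) = t"
| "issue_time (PutOp k v t s m tr) = t"

fun return_time :: "('k, 'v) cop \<Rightarrow> real" where
  "return_time (GetOp k t tr m) = tr"
| "return_time (PutOp k v t s m tr) = tr"

fun is_get :: "('k, 'v) cop \<Rightarrow> bool" where
  "is_get (GetOp k t tr m) = True"
| "is_get (PutOp k v t s m tr) = False"

fun is_put :: "('k, 'v) cop \<Rightarrow> bool" where
  "is_put (GetOp k t tr m) = False"
| "is_put (PutOp k v t s m tr) = True"

fun exec_op :: "(real \<Rightarrow> real) \<Rightarrow> real \<times> real \<Rightarrow> ('k, 'v) cop \<Rightarrow> real \<times> real" where
  "exec_op clk (dt, cg) (GetOp k t tr m) = (dt, max cg m)"
| "exec_op clk (dt, cg) (PutOp k v t s m tr) = (clk tr, max cg m)"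

fun op_ok :: "(real \<Rightarrow> real) \<Rightarrow> real \<times> real \<Rightarrow> ('k, 'v) cop \<Rightarrow> bool" where
  "op_ok clk (dt, cg) (GetOp k t tr m) = (t < tr)"
| "op_ok clk (dt, cg) (PutOp k v t s m tr) = (t \<le> s \<and> s < tr \<and> clk s > cg)"

fun op_ts :: "(real \<Rightarrow> real) \<Rightarrow> real \<times> real \<Rightarrow> ('k, 'v) cop \<Rightarrow> real" where
  "op_ts clk (dt, cg) (GetOp k t tr m) = max dt cg"
| "op_ts clk (dt, cg) (PutOp k v t s m tr) = clk s"

definition state_before :: "(real \<Rightarrow> real) \<Rightarrow> ('k, 'v) cop list \<Rightarrow> nat \<Rightarrow> real \<times> real" where
  "state_before clk ops n = foldl (exec_op clk) (0, 0) (take n ops)"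

definition correct_run :: "(real \<Rightarrow> real) \<Rightarrow> ('k, 'v) cop list \<Rightarrow> bool" where
  "correct_run clk ops \<longleftrightarrow>
     (\<forall>n < length ops. op_ok clk (state_before clk ops n) (ops ! n)) \<and>
     (\<forall>n. Suc n < length ops \<longrightarrow> return_time (ops ! n) \<le> issue_time (ops ! Suc n))"

end

theory Submission
  imports Defs
begin

text \<open>
The put's timestamp is a clock reading \<open>clk s\<close> taken after waiting until \<open>clk s > cgst\<close>.
Since cgst never decreases, it dominates the cgst used by the earlier get. The dt used by
the get is either 0 or a clock reading taken when some still earlier put returned, which
happened before the get was issued and hence strictly before time \<open>s\<close>; as the clock is
positive and strictly increasing, it is below \<open>clk s\<close> as well.
\<close>

lemma state_before_Suc:
  "n < length ops \<Longrightarrow>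
    state_before clk ops (Suc n) = exec_op clk (state_before clk ops n) (ops ! n)"
  by (simp add: state_before_def take_Suc_conv_app_nth)

lemma mono_cgst_state_before: "mono (\<lambda>n. snd (state_before clk ops n))"
proof (rule mono_iff_le_Suc[THEN iffD2], intro allI)
  fix n
  show "snd (state_before clk ops n) \<le> snd (state_before clk ops (Suc n))"
  proof (cases "n < length ops")
    case True
    then show ?thesis
      by (simp add: state_before_Suc) (cases "state_before clk ops n"; cases "ops ! n"; simp)
  qed (simp add: state_before_def)
qed

lemma dt_state_before_cases:
  "n \<le> length ops \<Longrightarrow>
    fst (state_before clk ops n) = 0 \<or>
    (\<exists>p<n. fst (state_before clk ops n) = clk (return_time (ops ! p)))"
proof (induction n)
  case 0
  then show ?case by (simp add: state_before_def)
next
  case (Suc n)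
  then have step: "state_before clk ops (Suc n) = exec_op clk (state_before clk ops n) (ops ! n)"
    by (simp add: state_before_Suc)
  show ?case
  proof (cases "ops ! n")
    case (GetOp k t tr m)
    then have "fst (state_before clk ops (Suc n)) = fst (state_before clk ops n)"
      using step by (cases "state_before clk ops n") simp
    then show ?thesis
      using Suc by (auto intro: less_SucI)
  next
    case (PutOp k v t s m tr)
    then have "fst (state_before clk ops (Suc n)) = clk (return_time (ops ! n))"
      using step by (cases "state_before clk ops n") simp
    then show ?thesis by blast
  qed
qed

lemma correct_run_issue_less_return:
  assumes "correct_run clk ops" and "n < length ops"
  shows "issue_time (ops ! n) < return_time (ops ! n)"
proof -
  have "op_ok clk (state_before clk ops n) (ops ! n)"
    using assms by (simp add: correct_run_def)
  then show ?thesis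
    by (cases "state_before clk ops n"; cases "ops ! n") auto
qed

lemma correct_run_return_le_issue:
  "correct_run clk ops \<Longrightarrow> q < length ops \<Longrightarrow> p < q \<Longrightarrow>
    return_time (ops ! p) \<le> issue_time (ops ! q)"
proof (induction q)
  case 0
  then show ?case by simp
next
  case (Suc q)
  have next_op: "return_time (ops ! q) \<le> issue_time (ops ! Suc q)"
    using Suc.prems by (simp add: correct_run_def)
  show ?case
  proof (cases "p = q")
    case False
    then have "return_time (ops ! p) \<le> issue_time (ops ! q)"
      using Suc by simp
    also have "\<dots> < return_time (ops ! q)"
      using Suc.prems by (simp add: correct_run_issue_less_return)
    finally show ?thesis using next_op by simp
  qed (use next_op in simp)
qed

lemma dt_state_before_less_clk:
  assumes "strict_mono clk" and "\<forall>t. 0 < clk t" and "correct_run clk ops"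
    and "n < length ops" and "issue_time (ops ! n) < \<tau>"
  shows "fst (state_before clk ops n) < clk \<tau>"
proof -
  have "fst (state_before clk ops n) = 0 \<or>
      (\<exists>p<n. fst (state_before clk ops n) = clk (return_time (ops ! p)))"
    using assms(4) by (simp add: dt_state_before_cases)
  then show ?thesis
  proof (elim disjE exE conjE)
    fix p
    assume "p < n" and dt: "fst (state_before clk ops n) = clk (return_time (ops ! p))"
    then have "return_time (ops ! p) < \<tau>"
      using assms correct_run_return_le_issue[of clk ops n p] by simp
    then show ?thesis
      using dt assms(1) by (simp add: strict_mono_less)
  qed (use assms(2) in simp)
qed

theorem lemma4:
  fixes clk :: "real \<Rightarrow> real" and ops :: "('k, 'v) cop list" and i j :: nat
  assumes "strict_mono clk"
    and "\<forall>t. 0 < clk t"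
    and "correct_run clk ops"
    and "i < j" and "j < length ops"
    and "is_get (ops ! i)" and "is_put (ops ! j)"
  shows "op_ts clk (state_before clk ops j) (ops ! j) > op_ts clk (state_before clk ops i) (ops ! i)"
proof -
  obtain k v t s m tr where put: "ops ! j = PutOp k v t s m tr"
    using assms(7) by (cases "ops ! j") auto
  obtain k' t' tr' m' where get: "ops ! i = GetOp k' t' tr' m'"
    using assms(6) by (cases "ops ! i") auto
  have "op_ok clk (state_before clk ops j) (ops ! j)"
    using assms by (simp add: correct_run_def)
  then have "t \<le> s" and cgst_j_less: "snd (state_before clk ops j) < clk s"
    using put by (cases "state_before clk ops j"; simp)+
  have "issue_time (ops ! i) < return_time (ops ! i)"
    using assms by (simp add: correct_run_issue_less_return)
  also have "\<dots> \<le> issue_time (ops ! j)"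
    using assms by (simp add: correct_run_return_le_issue)
  finally have "issue_time (ops ! i) < s"
    using put \<open>t \<le> s\<close> by simp
  then have "fst (state_before clk ops i) < clk s"
    using assms by (simp add: dt_state_before_less_clk)
  moreover have "snd (state_before clk ops i) < clk s"
    using monoD[OF mono_cgst_state_before[of clk ops], of i j] assms(4) cgst_j_less by simp
  ultimately show ?thesis
    using put get by (cases "state_before clk ops i"; cases "state_before clk ops j") simp
qed

end
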